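(* Let the premiums $\{X_n, n\geq 1\}$ and the claims $\{Y_n, n\geq 1\}$ be sequences of nonnegative, identically distributed, independent random variables with finite expectations, and let the rates of interest $\{I_n, n\geq 1\}$ be a sequence of i.i.d. nonnegative random variables with finite expectations. Suppose that the sequences $\{X_n\}$, $\{Y_n\}$, $\{I_n\}$ are mutually independent. For $u\geq 0$ define $U_0=u$, $U_n=(U_{n-1}+X_n)(1+I_n)-Y_n$ for $n\geq 1$, and $\Psi(u)=\mathbb{P}\big(\bigcup_{n=1}^\infty\{U_n<0\}\big)$. If there exists a positive real number $R$ satisfying $$\mathbb{E}\Big(e^{R\left(Y_1(1+I_1)^{-1}-X_1\right)}\Big)\leq 1,$$ then $\Psi(u)\leq e^{-Ru}$ for all $u>0$. *)

theory Defs
  imports "HOL-Probability.Probability"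
begin

text \<open>Surplus process of the discrete-time risk model with interest:
  U_0 = u, U_n = (U_{n-1} + X_n)(1 + I_n) - Y_n for n >= 1.
  The sequences are indexed from 1; the value at index 0 is never used.\<close>
fun surplus :: "real \<Rightarrow> (nat \<Rightarrow> 'a \<Rightarrow> real) \<Rightarrow> (nat \<Rightarrow> 'a \<Rightarrow> real)
    \<Rightarrow> (nat \<Rightarrow> 'a \<Rightarrow> real) \<Rightarrow> nat \<Rightarrow> 'a \<Rightarrow> real" where
  "surplus u X Y I 0 \<omega> = u"
| "surplus u X Y I (Suc n) \<omega> =
     (surplus u X Y I n \<omega> + X (Suc n) \<omega>) * (1 + I (Suc n) \<omega>) - Y (Suc n) \<omega>"

definition ruin_prob :: "'a measure \<Rightarrow> real \<Rightarrow> (nat \<Rightarrow> 'a \<Rightarrow> real)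
    \<Rightarrow> (nat \<Rightarrow> 'a \<Rightarrow> real) \<Rightarrow> (nat \<Rightarrow> 'a \<Rightarrow> real) \<Rightarrow> real" where
  "ruin_prob M u X Y I =
     measure M (\<Union>n\<in>{1..}. {\<omega> \<in> space M. surplus u X Y I n \<omega> < 0})"

definition joint_family :: "(nat \<Rightarrow> 'a \<Rightarrow> real) \<Rightarrow> (nat \<Rightarrow> 'a \<Rightarrow> real)
    \<Rightarrow> (nat \<Rightarrow> 'a \<Rightarrow> real) \<Rightarrow> nat + nat + nat \<Rightarrow> 'a \<Rightarrow> real" where
  "joint_family X Y I = case_sum X (case_sum Y I)"

end

theory Submission
  imports Defs
begin

(* Let Z_n = Y_n / (1 + I_n) - X_n.  If the company is not ruined by time n, then
   U_(n+1) = (1 + I_(n+1)) (U_n - Z_(n+1)) with 1 + I_(n+1) >= 1, hence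
   min(1, exp(-R U_(n+1))) <= exp(-R U_n) exp(R Z_(n+1)).  So the majorant which is 1 after ruin
   and exp(-R U_n) before has nonincreasing expectation, because Z_(n+1) is independent of the
   past and E exp(R Z_(n+1)) = E exp(R Z_1) <= 1.  It starts at exp(-R u) and dominates the
   indicator of ruin by time n; continuity from below passes to the infinite horizon. *)

lemma surplus_cong:
  assumes "\<And>j. 1 \<le> j \<Longrightarrow> j \<le> n \<Longrightarrow> X j \<omega> = X' j \<omega>' \<and> Y j \<omega> = Y' j \<omega>' \<and> I j \<omega> = I' j \<omega>'"
  shows "surplus u X Y I n \<omega> = surplus u X' Y' I' n \<omega>'"
  using assms by (induction n) auto

lemma borel_measurable_surplus:
  assumes "\<And>j. 1 \<le> j \<Longrightarrow> j \<le> n \<Longrightarrow>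
    X j \<in> borel_measurable N \<and> Y j \<in> borel_measurable N \<and> I j \<in> borel_measurable N"
  shows "surplus u X Y I n \<in> borel_measurable N"
  using assms
proof (induction n)
  case 0
  have "surplus u X Y I 0 = (\<lambda>_. u)" by (simp add: fun_eq_iff)
  then show ?case by simp
next
  case (Suc n)
  then have [measurable]: "surplus u X Y I n \<in> borel_measurable N"
    "X (Suc n) \<in> borel_measurable N" "Y (Suc n) \<in> borel_measurable N"
    "I (Suc n) \<in> borel_measurable N"
    by auto
  show ?case by simp
qed

definition net_loss :: "(nat \<Rightarrow> 'a \<Rightarrow> real) \<Rightarrow> (nat \<Rightarrow> 'a \<Rightarrow> real) \<Rightarrow> (nat \<Rightarrow> 'a \<Rightarrow> real)
    \<Rightarrow> nat \<Rightarrow> 'a \<Rightarrow> real" where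
  "net_loss X Y I n \<omega> = Y n \<omega> / (1 + I n \<omega>) - X n \<omega>"

lemma surplus_Suc_eq_net_loss:
  assumes "1 + I (Suc n) \<omega> \<noteq> 0"
  shows "surplus u X Y I (Suc n) \<omega>
    = (1 + I (Suc n) \<omega>) * (surplus u X Y I n \<omega> - net_loss X Y I (Suc n) \<omega>)"
  using assms by (simp add: net_loss_def field_simps)

lemma lundberg_step:
  fixes c v R :: real
  assumes "c \<ge> 1" "R \<ge> 0"
  shows "(if c * v < 0 then 1 else ennreal (exp (- R * (c * v)))) \<le> ennreal (exp (- R * v))"
proof (cases "c * v < 0")
  case True
  then have "v < 0" using assms(1) by (simp add: mult_less_0_iff)
  then show ?thesis using True assms(2) by (simp add: mult_nonneg_nonpos)
next
  case False
  then have "v \<ge> 0" using assms(1) by (auto simp: not_less zero_le_mult_iff)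
  then have "v \<le> c * v" using assms(1) by (simp add: mult_le_cancel_right1)
  then have "- R * (c * v) \<le> - R * v" using assms(2) by (simp add: mult_left_mono)
  then show ?thesis using False by (simp add: ennreal_leI)
qed

lemma (in prob_space) indep_var_nn_integral:
  fixes A B :: "'a \<Rightarrow> ennreal"
  assumes "indep_var borel A borel B"
  shows "(\<integral>\<^sup>+\<omega>. A \<omega> * B \<omega> \<partial>M) = (\<integral>\<^sup>+\<omega>. A \<omega> \<partial>M) * (\<integral>\<^sup>+\<omega>. B \<omega> \<partial>M)"
proof -
  have "case_bool borel borel = (\<lambda>_::bool. borel :: ennreal measure)"
    by (auto simp: fun_eq_iff split: bool.split)
  then have "indep_vars (\<lambda>_. borel) (case_bool A B) UNIV"
    using assms unfolding indep_var_def by simp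
  from indep_vars_nn_integral[OF _ this] show ?thesis
    by (simp add: UNIV_bool mult.commute)
qed

lemma (in prob_space) indep_var_restrict_compose:
  assumes "indep_vars M' F J" "A \<inter> B = {}" "A \<subseteq> J" "B \<subseteq> J"
    "f \<in> PiM A M' \<rightarrow>\<^sub>M N1" "g \<in> PiM B M' \<rightarrow>\<^sub>M N2"
  shows "indep_var N1 (\<lambda>\<omega>. f (restrict (\<lambda>i. F i \<omega>) A)) N2 (\<lambda>\<omega>. g (restrict (\<lambda>i. F i \<omega>) B))"
  using indep_var_compose[OF indep_var_restrict[OF assms(1-4)] assms(5,6)] by (simp add: comp_def)

text \<open>Independence of the past and the next period is obtained by writing both as functions of
  restrictions of the joint family to disjoint sets of coordinates; \<open>coord_surplus\<close> and
  \<open>coord_net_loss\<close> read the surplus and the net loss off such coordinates.\<close>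

definition period_coords :: "nat \<Rightarrow> (nat + nat + nat) set" where
  "period_coords m = {Inl m, Inr (Inl m), Inr (Inr m)}"

definition history_coords :: "nat \<Rightarrow> (nat + nat + nat) set" where
  "history_coords n = (\<Union>m\<in>{1..n}. period_coords m)"

lemma period_coords_subset_history_coords:
  "1 \<le> m \<Longrightarrow> m \<le> n \<Longrightarrow> period_coords m \<subseteq> history_coords n"
  unfolding history_coords_def by (rule UN_upper) simp

lemma history_coords_mono: "j \<le> n \<Longrightarrow> history_coords j \<subseteq> history_coords n"
  unfolding history_coords_def by (rule UN_mono) auto

definition coord_surplus :: "real \<Rightarrow> nat \<Rightarrow> (nat + nat + nat \<Rightarrow> real) \<Rightarrow> real" where
  "coord_surplus u = surplus u (\<lambda>k h. h (Inl k)) (\<lambda>k h. h (Inr (Inl k))) (\<lambda>k h. h (Inr (Inr k)))"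

definition coord_net_loss :: "nat \<Rightarrow> (nat + nat + nat \<Rightarrow> real) \<Rightarrow> real" where
  "coord_net_loss = net_loss (\<lambda>k h. h (Inl k)) (\<lambda>k h. h (Inr (Inl k))) (\<lambda>k h. h (Inr (Inr k)))"

lemma borel_measurable_coord_surplus:
  assumes "history_coords n \<subseteq> A"
  shows "coord_surplus u n \<in> borel_measurable (PiM A (\<lambda>_. borel))"
  unfolding coord_surplus_def
  by (rule borel_measurable_surplus)
     (use assms in \<open>auto simp: history_coords_def period_coords_def
        intro!: measurable_component_singleton\<close>)

lemma borel_measurable_coord_net_loss:
  "coord_net_loss n \<in> borel_measurable (PiM (period_coords n) (\<lambda>_. borel))"
proof -
  have [measurable]: "(\<lambda>h. h i) \<in> borel_measurable (PiM (period_coords n) (\<lambda>_. borel))"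
    if "i \<in> period_coords n" for i
    using that by (rule measurable_component_singleton)
  have [simp]: "Inl n \<in> period_coords n" "Inr (Inl n) \<in> period_coords n"
    "Inr (Inr n) \<in> period_coords n"
    by (auto simp: period_coords_def)
  show ?thesis unfolding coord_net_loss_def net_loss_def[abs_def] by measurable
qed

locale risk_model = prob_space M for M :: "'a measure" +
  fixes X Y I :: "nat \<Rightarrow> 'a \<Rightarrow> real"
  assumes measurable_XYI: "\<And>n. n \<ge> 1 \<Longrightarrow>
      X n \<in> borel_measurable M \<and> Y n \<in> borel_measurable M \<and> I n \<in> borel_measurable M"
    and rate_nonneg: "\<And>n. n \<ge> 1 \<Longrightarrow> AE \<omega> in M. I n \<omega> \<ge> 0"
    and indep_XYI: "indep_vars (\<lambda>_. borel) (joint_family X Y I)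
      (Inl ` {1..} \<union> Inr ` Inl ` {1..} \<union> Inr ` Inr ` {1..})"
begin

lemma borel_measurable_XYI:
  assumes "n \<ge> 1"
  shows "X n \<in> borel_measurable M" "Y n \<in> borel_measurable M" "I n \<in> borel_measurable M"
  using measurable_XYI[OF assms] by auto

definition coords :: "(nat + nat + nat) set \<Rightarrow> 'a \<Rightarrow> nat + nat + nat \<Rightarrow> real" where
  "coords A \<omega> = restrict (\<lambda>i. joint_family X Y I i \<omega>) A"

lemma coord_surplus_coords:
  assumes "history_coords n \<subseteq> A"
  shows "coord_surplus u n (coords A \<omega>) = surplus u X Y I n \<omega>"
  unfolding coord_surplus_def
proof (rule surplus_cong)
  fix j assume "1 \<le> j" "j \<le> n"
  then have "period_coords j \<subseteq> A"
    using assms period_coords_subset_history_coords by blast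
  then show "coords A \<omega> (Inl j) = X j \<omega> \<and> coords A \<omega> (Inr (Inl j)) = Y j \<omega>
      \<and> coords A \<omega> (Inr (Inr j)) = I j \<omega>"
    by (simp add: coords_def period_coords_def joint_family_def)
qed

lemma coord_net_loss_coords:
  "coord_net_loss n (coords (period_coords n) \<omega>) = net_loss X Y I n \<omega>"
  by (simp add: coord_net_loss_def coords_def net_loss_def period_coords_def joint_family_def)

lemma indep_var_coords:
  assumes "A \<inter> B = {}" "A \<union> B \<subseteq> history_coords n"
    and "f \<in> PiM A (\<lambda>_. borel) \<rightarrow>\<^sub>M N1" "g \<in> PiM B (\<lambda>_. borel) \<rightarrow>\<^sub>M N2"
  shows "indep_var N1 (\<lambda>\<omega>. f (coords A \<omega>)) N2 (\<lambda>\<omega>. g (coords B \<omega>))"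
proof -
  have "history_coords n \<subseteq> Inl ` {1..} \<union> Inr ` Inl ` {1..} \<union> Inr ` Inr ` {1..}"
    by (auto simp: history_coords_def period_coords_def)
  then show ?thesis
    unfolding coords_def using assms
    by (intro indep_var_restrict_compose[OF indep_XYI]) auto
qed

text \<open>\<open>indep_var\<close> relates variables of one common type, so the joint law of the triple
  \<open>(X n, Y n, I n)\<close> is not directly available; instead the moment is split into a factor depending
  on the law of \<open>X n\<close> and one depending on the (product) law of \<open>(Y n, I n)\<close>.\<close>

lemma nn_integral_exp_net_loss:
  assumes "n \<ge> 1"
  shows "(\<integral>\<^sup>+\<omega>. ennreal (exp (R * net_loss X Y I n \<omega>)) \<partial>M)
    = (\<integral>\<^sup>+x. ennreal (exp (- R * x)) \<partial>distr M borel (X n))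
      * (\<integral>\<^sup>+z. ennreal (exp (R * (fst z / (1 + snd z))))
          \<partial>(distr M borel (Y n) \<Otimes>\<^sub>M distr M borel (I n)))"
proof -
  note [measurable] = borel_measurable_XYI[OF assms]
  have sub: "period_coords n \<subseteq> history_coords n"
    using assms by (intro period_coords_subset_history_coords) auto
  let ?A = "{Inl n}" and ?B = "{Inr (Inl n), Inr (Inr n)}"
  have "indep_var borel (\<lambda>\<omega>. ennreal (exp (- R * coords ?A \<omega> (Inl n)))) borel
      (\<lambda>\<omega>. ennreal (exp (R * (coords ?B \<omega> (Inr (Inl n)) / (1 + coords ?B \<omega> (Inr (Inr n)))))))"
    using sub
    by (intro indep_var_coords) (auto simp: period_coords_def intro: measurable_component_singleton)
  then have indep_X_YI: "indep_var borel (\<lambda>\<omega>. ennreal (exp (- R * X n \<omega>))) borel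
      (\<lambda>\<omega>. ennreal (exp (R * (Y n \<omega> / (1 + I n \<omega>)))))"
    by (simp add: coords_def joint_family_def)
  have "indep_var borel (\<lambda>\<omega>. coords {Inr (Inl n)} \<omega> (Inr (Inl n))) borel
      (\<lambda>\<omega>. coords {Inr (Inr n)} \<omega> (Inr (Inr n)))"
    using sub
    by (intro indep_var_coords measurable_component_singleton) (auto simp: period_coords_def)
  then have "indep_var borel (Y n) borel (I n)"
    by (simp add: coords_def joint_family_def)
  then have distr_YI: "distr M borel (Y n) \<Otimes>\<^sub>M distr M borel (I n)
      = distr M (borel \<Otimes>\<^sub>M borel) (\<lambda>\<omega>. (Y n \<omega>, I n \<omega>))"
    unfolding indep_var_distribution_eq by simp
  have "(\<integral>\<^sup>+\<omega>. ennreal (exp (R * net_loss X Y I n \<omega>)) \<partial>M)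
      = (\<integral>\<^sup>+\<omega>. ennreal (exp (- R * X n \<omega>)) * ennreal (exp (R * (Y n \<omega> / (1 + I n \<omega>)))) \<partial>M)"
    by (intro nn_integral_cong)
       (simp add: net_loss_def ennreal_mult[symmetric] exp_add[symmetric] algebra_simps)
  also have "\<dots> = (\<integral>\<^sup>+\<omega>. ennreal (exp (- R * X n \<omega>)) \<partial>M)
      * (\<integral>\<^sup>+\<omega>. ennreal (exp (R * (Y n \<omega> / (1 + I n \<omega>)))) \<partial>M)"
    by (rule indep_var_nn_integral[OF indep_X_YI])
  finally show ?thesis
    unfolding distr_YI by (simp add: nn_integral_distr)
qed

definition ruined_by :: "real \<Rightarrow> nat \<Rightarrow> 'a \<Rightarrow> bool" where
  "ruined_by u n \<omega> \<longleftrightarrow> (\<exists>j\<in>{1..n}. surplus u X Y I j \<omega> < 0)"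

definition ruin_majorant :: "real \<Rightarrow> real \<Rightarrow> nat \<Rightarrow> 'a \<Rightarrow> ennreal" where
  "ruin_majorant R u n \<omega> =
    (if ruined_by u n \<omega> then 1 else ennreal (exp (- R * surplus u X Y I n \<omega>)))"

lemma ruined_by_Suc:
  "ruined_by u (Suc n) \<omega> \<longleftrightarrow> ruined_by u n \<omega> \<or> surplus u X Y I (Suc n) \<omega> < 0"
  unfolding ruined_by_def using atLeastAtMostSuc_conv[of 1 n] by (auto simp del: surplus.simps)

lemma borel_measurable_surplus_XYI [measurable]: "surplus u X Y I n \<in> borel_measurable M"
  by (rule borel_measurable_surplus) (use measurable_XYI in auto)

lemma pred_ruined_by [measurable]: "Measurable.pred M (ruined_by u n)"
  unfolding ruined_by_def[abs_def] by measurable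

lemma borel_measurable_net_loss:
  assumes "n \<ge> 1"
  shows "net_loss X Y I n \<in> borel_measurable M"
  using borel_measurable_XYI[OF assms] unfolding net_loss_def[abs_def] by measurable

lemma indep_history_next_period:
  assumes "f \<in> borel_measurable (PiM (history_coords n) (\<lambda>_. borel))"
    and "g \<in> borel_measurable (PiM (period_coords (Suc n)) (\<lambda>_. borel))"
  shows "indep_var borel (\<lambda>\<omega>. f (coords (history_coords n) \<omega>))
    borel (\<lambda>\<omega>. g (coords (period_coords (Suc n)) \<omega>))"
proof (rule indep_var_coords[where n = "Suc n"])
  show "history_coords n \<inter> period_coords (Suc n) = {}"
    by (auto simp: history_coords_def period_coords_def)
  show "history_coords n \<union> period_coords (Suc n) \<subseteq> history_coords (Suc n)"
    using history_coords_mono[of n "Suc n"] period_coords_subset_history_coords[of "Suc n" "Suc n"]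
    by auto
qed (use assms in auto)

lemma indep_survival_next_period:
  "indep_var borel (\<lambda>\<omega>. if ruined_by u n \<omega> then 0 else ennreal (exp (- R * surplus u X Y I n \<omega>)))
    borel (\<lambda>\<omega>. ennreal (exp (R * net_loss X Y I (Suc n) \<omega>)))"
proof -
  have [measurable]: "coord_surplus u j \<in> borel_measurable (PiM (history_coords n) (\<lambda>_. borel))"
    if "j \<le> n" for j
    using that by (intro borel_measurable_coord_surplus history_coords_mono)
  note [measurable] = borel_measurable_coord_net_loss[of "Suc n"]
  have ruined: "(\<exists>j\<in>{1..n}. coord_surplus u j (coords (history_coords n) \<omega>) < 0)
      \<longleftrightarrow> ruined_by u n \<omega>" for \<omega>
    by (auto simp: ruined_by_def coord_surplus_coords history_coords_mono)
  have "indep_var borel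
      (\<lambda>\<omega>. (\<lambda>h. if \<exists>j\<in>{1..n}. coord_surplus u j h < 0 then 0
              else ennreal (exp (- R * coord_surplus u n h))) (coords (history_coords n) \<omega>))
      borel (\<lambda>\<omega>. (\<lambda>h. ennreal (exp (R * coord_net_loss (Suc n) h)))
        (coords (period_coords (Suc n)) \<omega>))"
    by (rule indep_history_next_period) measurable
  then show ?thesis
    unfolding ruined coord_surplus_coords[where A = "history_coords n", OF order_refl]
      coord_net_loss_coords .
qed

lemma ruin_majorant_Suc_le:
  assumes "R \<ge> 0"
  shows "AE \<omega> in M. ruin_majorant R u (Suc n) \<omega> \<le>
    (if ruined_by u n \<omega> then 1 else 0)
    + (if ruined_by u n \<omega> then 0 else ennreal (exp (- R * surplus u X Y I n \<omega>)))
      * ennreal (exp (R * net_loss X Y I (Suc n) \<omega>))"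
proof -
  have "AE \<omega> in M. I (Suc n) \<omega> \<ge> 0" by (rule rate_nonneg) simp
  then show ?thesis
  proof eventually_elim
    case (elim \<omega>)
    let ?c = "1 + I (Suc n) \<omega>" and ?U = "surplus u X Y I n \<omega>" and ?Z = "net_loss X Y I (Suc n) \<omega>"
    show ?case
    proof (cases "ruined_by u n \<omega>")
      case True
      then show ?thesis by (simp add: ruin_majorant_def ruined_by_Suc)
    next
      case False
      have "surplus u X Y I (Suc n) \<omega> = ?c * (?U - ?Z)"
        using elim by (intro surplus_Suc_eq_net_loss) simp
      then have "ruin_majorant R u (Suc n) \<omega>
          = (if ?c * (?U - ?Z) < 0 then 1 else ennreal (exp (- R * (?c * (?U - ?Z)))))"
        using False by (simp only: ruin_majorant_def ruined_by_Suc simp_thms)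
      also have "\<dots> \<le> ennreal (exp (- R * (?U - ?Z)))"
        using elim assms by (intro lundberg_step) simp_all
      also have "\<dots> = ennreal (exp (- R * ?U)) * ennreal (exp (R * ?Z))"
        by (simp add: ennreal_mult[symmetric] exp_add[symmetric] algebra_simps)
      finally show ?thesis using False by simp
    qed
  qed
qed

lemma nn_integral_ruin_majorant_Suc_le:
  assumes "R \<ge> 0" and moment: "(\<integral>\<^sup>+\<omega>. ennreal (exp (R * net_loss X Y I (Suc n) \<omega>)) \<partial>M) \<le> 1"
  shows "(\<integral>\<^sup>+\<omega>. ruin_majorant R u (Suc n) \<omega> \<partial>M) \<le> (\<integral>\<^sup>+\<omega>. ruin_majorant R u n \<omega> \<partial>M)"
proof -
  define p where "p \<omega> = (if ruined_by u n \<omega> then 1 else 0 :: ennreal)" for \<omega>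
  define q where "q \<omega> = (if ruined_by u n \<omega> then 0 else ennreal (exp (- R * surplus u X Y I n \<omega>)))"
    for \<omega>
  define e where "e \<omega> = ennreal (exp (R * net_loss X Y I (Suc n) \<omega>))" for \<omega>
  have [measurable]: "p \<in> borel_measurable M" "q \<in> borel_measurable M"
    unfolding p_def[abs_def] q_def[abs_def] by measurable
  have [measurable]: "e \<in> borel_measurable M"
    using borel_measurable_net_loss[of "Suc n"] unfolding e_def[abs_def] by measurable
  have indep: "indep_var borel q borel e"
    unfolding q_def[abs_def] e_def[abs_def] by (rule indep_survival_next_period)
  have "(\<integral>\<^sup>+\<omega>. ruin_majorant R u (Suc n) \<omega> \<partial>M) \<le> (\<integral>\<^sup>+\<omega>. p \<omega> + q \<omega> * e \<omega> \<partial>M)"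
    unfolding p_def q_def e_def by (rule nn_integral_mono_AE[OF ruin_majorant_Suc_le[OF assms(1)]])
  also have "\<dots> = (\<integral>\<^sup>+\<omega>. p \<omega> \<partial>M) + (\<integral>\<^sup>+\<omega>. q \<omega> \<partial>M) * (\<integral>\<^sup>+\<omega>. e \<omega> \<partial>M)"
    by (simp add: nn_integral_add indep_var_nn_integral[OF indep])
  also have "\<dots> \<le> (\<integral>\<^sup>+\<omega>. p \<omega> \<partial>M) + (\<integral>\<^sup>+\<omega>. q \<omega> \<partial>M)"
    using moment unfolding e_def by (intro add_left_mono mult_left_le) simp_all
  also have "\<dots> = (\<integral>\<^sup>+\<omega>. p \<omega> + q \<omega> \<partial>M)"
    by (simp add: nn_integral_add)
  also have "\<dots> = (\<integral>\<^sup>+\<omega>. ruin_majorant R u n \<omega> \<partial>M)"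
    by (intro nn_integral_cong) (simp add: p_def q_def ruin_majorant_def)
  finally show ?thesis .
qed

lemma emeasure_ruined_by_le:
  assumes "R \<ge> 0"
    and moment: "\<And>n. n \<ge> 1 \<Longrightarrow> (\<integral>\<^sup>+\<omega>. ennreal (exp (R * net_loss X Y I n \<omega>)) \<partial>M) \<le> 1"
  shows "emeasure M {\<omega> \<in> space M. ruined_by u n \<omega>} \<le> ennreal (exp (- R * u))"
proof -
  have "emeasure M {\<omega> \<in> space M. ruined_by u n \<omega>}
      = (\<integral>\<^sup>+\<omega>. indicator {\<omega> \<in> space M. ruined_by u n \<omega>} \<omega> \<partial>M)"
    by (rule nn_integral_indicator[symmetric]) measurable
  also have "\<dots> \<le> (\<integral>\<^sup>+\<omega>. ruin_majorant R u n \<omega> \<partial>M)"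
    by (intro nn_integral_mono) (simp add: ruin_majorant_def indicator_def)
  also have "\<dots> \<le> (\<integral>\<^sup>+\<omega>. ruin_majorant R u 0 \<omega> \<partial>M)"
    by (rule lift_Suc_antimono_le[of "\<lambda>n. \<integral>\<^sup>+\<omega>. ruin_majorant R u n \<omega> \<partial>M"])
       (simp_all add: nn_integral_ruin_majorant_Suc_le assms)
  also have "\<dots> = ennreal (exp (- R * u))"
    by (simp add: ruin_majorant_def ruined_by_def emeasure_space_1)
  finally show ?thesis .
qed

lemma ruin_prob_le_exp:
  assumes "R \<ge> 0"
    and moment: "\<And>n. n \<ge> 1 \<Longrightarrow> (\<integral>\<^sup>+\<omega>. ennreal (exp (R * net_loss X Y I n \<omega>)) \<partial>M) \<le> 1"
  shows "ruin_prob M u X Y I \<le> exp (- R * u)"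
proof -
  define A where "A n = {\<omega> \<in> space M. ruined_by u n \<omega>}" for n
  have ruin_UN: "(\<Union>n\<in>{1..}. {\<omega> \<in> space M. surplus u X Y I n \<omega> < 0}) = (\<Union>n. A n)"
    by (auto simp: A_def ruined_by_def simp del: surplus.simps) (meson atLeastAtMost_iff order_refl)
  have "incseq A"
    by (rule incseq_SucI) (auto simp: A_def ruined_by_Suc simp del: surplus.simps)
  then have "emeasure M (\<Union>n. A n) = (SUP n. emeasure M (A n))"
    by (rule SUP_emeasure_incseq[symmetric, rotated]) (auto simp: A_def)
  also have "\<dots> \<le> ennreal (exp (- R * u))"
    unfolding A_def by (intro SUP_least emeasure_ruined_by_le assms)
  finally show ?thesis
    unfolding ruin_prob_def ruin_UN by (simp add: emeasure_eq_measure)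
qed

end

theorem corollary3p2:
  fixes M :: "'a measure" and X Y I :: "nat \<Rightarrow> 'a \<Rightarrow> real" and R u :: real
  assumes "prob_space M"
    and meas: "\<And>n. n \<ge> 1 \<Longrightarrow> X n \<in> borel_measurable M \<and> Y n \<in> borel_measurable M
                              \<and> I n \<in> borel_measurable M"
    and nonneg: "\<And>n. n \<ge> 1 \<Longrightarrow>
        (AE \<omega> in M. X n \<omega> \<ge> 0) \<and> (AE \<omega> in M. Y n \<omega> \<ge> 0) \<and> (AE \<omega> in M. I n \<omega> \<ge> 0)"
    and ident: "\<And>n. n \<ge> 1 \<Longrightarrow>
        distr M borel (X n) = distr M borel (X 1) \<and> distr M borel (Y n) = distr M borel (Y 1)
        \<and> distr M borel (I n) = distr M borel (I 1)"
    and finexp: "\<And>n. n \<ge> 1 \<Longrightarrow> integrable M (X n) \<and> integrable M (Y n) \<and> integrable M (I n)"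
    and indep: "prob_space.indep_vars M (\<lambda>_. borel) (joint_family X Y I)
                  (Inl ` {1..} \<union> Inr ` Inl ` {1..} \<union> Inr ` Inr ` {1..})"
    and R_pos: "R > 0"
    and lundberg: "(\<integral>\<^sup>+ \<omega>. ennreal (exp (R * (Y 1 \<omega> / (1 + I 1 \<omega>) - X 1 \<omega>))) \<partial>M) \<le> 1"
    and u_pos: "u > 0"
  shows "ruin_prob M u X Y I \<le> exp (- R * u)"
proof -
  interpret risk_model M X Y I
    using assms(1) meas nonneg indep by (simp add: risk_model_def risk_model_axioms_def)
  have "(\<integral>\<^sup>+\<omega>. ennreal (exp (R * net_loss X Y I n \<omega>)) \<partial>M) \<le> 1" if "n \<ge> 1" for n
  proof -
    have "(\<integral>\<^sup>+\<omega>. ennreal (exp (R * net_loss X Y I n \<omega>)) \<partial>M)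
        = (\<integral>\<^sup>+\<omega>. ennreal (exp (R * net_loss X Y I 1 \<omega>)) \<partial>M)"
      using nn_integral_exp_net_loss[OF that] nn_integral_exp_net_loss[of 1] ident[OF that] by simp
    also have "\<dots> \<le> 1"
      using lundberg by (simp add: net_loss_def)
    finally show ?thesis .
  qed
  with R_pos show ?thesis
    by (intro ruin_prob_le_exp) simp_all
qed

end
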